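(* Let $(\Omega,\mathcal E_\Omega,\mathbb P)$ be a probability space with data $X_{1:T}$, $\Theta$ a Borel subset of $\mathbf R^p$ with Borel $\sigma$-algebra, $\theta_0\in\Theta$, and $\theta^*_{T,C}$ a $\Theta$-valued random vector with $\theta^*_{T,C}\to\theta_0$ in $\mathbb P$-probability as $T\to\infty$. Let $\rho_P$ be the Prokhorov metric on probability measures on $\Theta$. Then: (i) $\rho_P(\delta_{\theta^*_{T,C}},\delta_{\theta_0})\to0$ in probability as $T\to\infty$; (ii) if moreover $u:\mathbf R^p\times\mathbf R^p\to\mathbf R_+$ satisfies: (a) $u=0$ outside $\Theta^2$ and $\theta\mapsto u(\theta,\dot\theta)$ is Borel measurable for each $\dot\theta\in\Theta$; (b) for each $\dot\theta\in\Theta$, $\theta\mapsto u(\dot\theta,\theta)$ is continuous in a neighborhood of $\theta_0$; (c) there is $r_1>0$ with $\int_\Theta\sup_{\dot\theta\in B_{r_1}(\theta_0)}u(\theta,\dot\theta)\,\lambda(d\theta)<\infty$; (d) there is $r_2>0$ with $\int_\Theta u(\theta,\dot\theta)\,\lambda(d\theta)>0$ for all $\dot\theta\in B_{r_2}(\theta_0)$; then, as $T\to\infty$, $$\rho_P\Big(\frac{\int_\cdot u(\theta,\theta^*_{T,C})\lambda(d\theta)}{\int_\Theta u(\dot\theta,\theta^*_{T,C})\lambda(d\dot\theta)},\ \frac{\int_\cdot u(\theta,\theta_0)\lambda(d\theta)}{\int_\Theta u(\dot\theta,\theta_0)\lambda(d\dot\theta)}\Big)\to0\ \text{in probability}.$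$
   Context: $\lambda$ is Lebesgue measure, $\delta_x$ the Dirac measure at $x$, and $B_r(\theta_0)$ the ball in $\Theta$ of radius $r$ centred at $\theta_0$. The displayed ratios denote probability measures $B\mapsto\int_B u(\theta,\cdot)\lambda(d\theta)/\int_\Theta u(\dot\theta,\cdot)\lambda(d\dot\theta)$ on Borel subsets of $\Theta$. *)

theory Defs
  imports "HOL-Probability.Probability"
begin

definition eps_nbhd :: "'a::metric_space set \<Rightarrow> 'a set \<Rightarrow> real \<Rightarrow> 'a set" where
  "eps_nbhd \<Theta> B \<epsilon> = {x \<in> \<Theta>. \<exists>y\<in>B. dist x y < \<epsilon>}"

definition prokhorov :: "'a::metric_space set \<Rightarrow> ('a set \<Rightarrow> real) \<Rightarrow> ('a set \<Rightarrow> real) \<Rightarrow> real" where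
  "prokhorov \<Theta> \<mu> \<nu> = Inf {\<epsilon>. \<epsilon> > 0 \<and>
     (\<forall>B \<in> sets (restrict_space borel \<Theta>).
        \<mu> B \<le> \<nu> (eps_nbhd \<Theta> B \<epsilon>) + \<epsilon> \<and> \<nu> B \<le> \<mu> (eps_nbhd \<Theta> B \<epsilon>) + \<epsilon>)}"

definition dirac_fun :: "'a \<Rightarrow> 'a set \<Rightarrow> real" where
  "dirac_fun x B = indicator B x"

definition dens_prob :: "('a::euclidean_space \<Rightarrow> 'a \<Rightarrow> real) \<Rightarrow> 'a set \<Rightarrow> 'a \<Rightarrow> 'a set \<Rightarrow> real" where
  "dens_prob u \<Theta> x B =
     enn2real (\<integral>\<^sup>+ \<theta>. ennreal (u \<theta> x) * indicator B \<theta> \<partial>lborel) /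
     enn2real (\<integral>\<^sup>+ \<theta>. ennreal (u \<theta> x) * indicator \<Theta> \<theta> \<partial>lborel)"

text \<open>Convergence to 0 in (outer) probability of a sequence of real functions on M:
  for every eps > 0 the event {|Z_T| > eps} is covered by events of probability tending to 0.
  For measurable Z this is ordinary convergence in probability.\<close>
definition conv_zero_in_prob :: "'w measure \<Rightarrow> (nat \<Rightarrow> 'w \<Rightarrow> real) \<Rightarrow> bool" where
  "conv_zero_in_prob M Z \<longleftrightarrow> (\<forall>\<epsilon>>0. \<exists>A. (\<forall>T. A T \<in> sets M \<and> {\<omega> \<in> space M. \<bar>Z T \<omega>\<bar> > \<epsilon>} \<subseteq> A T)
      \<and> (\<lambda>T. measure M (A T)) \<longlonglongrightarrow> 0)"

end

theory Submission
  imports Defs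
begin

text \<open>
  Both claims follow from a continuous-mapping argument: if \<open>y \<mapsto> \<mu>\<^sub>y\<close> is continuous at
  \<open>\<theta>0\<close> for the Prokhorov metric, then \<open>\<theta>*\<^sub>T \<rightarrow> \<theta>0\<close> in probability forces
  \<open>\<rho>\<^sub>P(\<mu>\<^bsub>\<theta>*\<^sub>T\<^esub>, \<mu>\<^bsub>\<theta>0\<^esub>) \<rightarrow> 0\<close> in probability. For Dirac measures
  \<open>\<rho>\<^sub>P(\<delta>\<^sub>x, \<delta>\<^sub>y) \<le> dist x y\<close>. For the normalised densities, the integrable envelope (c)
  and continuity (b) give \<open>u(\<cdot>, y) \<rightarrow> u(\<cdot>, \<theta>0)\<close> in \<open>L\<^sup>1(\<lambda>)\<close> by dominated convergence;
  since the normalising constant at \<open>\<theta>0\<close> is positive by (d), a small \<open>L\<^sup>1\<close> distance makes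
  the two normalised measures agree up to \<open>\<epsilon>\<close> on every Borel set, and such uniform closeness
  bounds the Prokhorov distance.
\<close>

lemma nn_integral_tendsto_zero_dominated_by_SUP:
  fixes h :: "nat \<Rightarrow> 'a \<Rightarrow> real"
  assumes [measurable]: "\<And>i. h i \<in> borel_measurable M" "g \<in> borel_measurable M"
    and nonneg: "\<And>i x. 0 \<le> h i x"
    and lim: "\<And>x. (\<lambda>i. h i x) \<longlonglongrightarrow> g x"
    and SUP_finite: "(\<integral>\<^sup>+x. (SUP i. ennreal (h i x)) \<partial>M) < \<infinity>"
  shows "(\<lambda>i. \<integral>\<^sup>+x. ennreal \<bar>h i x - g x\<bar> \<partial>M) \<longlonglongrightarrow> 0"
proof -
  define S where "S x = (SUP i. ennreal (h i x))" for x
  have [measurable]: "S \<in> borel_measurable M"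
    unfolding S_def by measurable
  have S_AE_finite: "AE x in M. S x \<noteq> \<infinity>"
    using nn_integral_PInf_AE[of S M] SUP_finite unfolding S_def by simp
  have "(\<lambda>i. \<integral>\<^sup>+x. norm (g x - h i x) \<partial>M) \<longlonglongrightarrow> 0"
  proof (rule nn_integral_dominated_convergence_norm[where w = "\<lambda>x. enn2real (S x)"])
    show "AE x in M. norm (h i x) \<le> enn2real (S x)" for i
      using S_AE_finite
    proof eventually_elim
      case (elim x)
      have "ennreal (h i x) \<le> S x"
        unfolding S_def by (rule SUP_upper) simp
      then have "enn2real (ennreal (h i x)) \<le> enn2real (S x)"
        using elim by (intro enn2real_mono) (simp_all add: less_top)
      then show ?case
        using nonneg[of i x] by simp
    qed
    have "(\<integral>\<^sup>+x. ennreal (enn2real (S x)) \<partial>M) \<le> (\<integral>\<^sup>+x. S x \<partial>M)"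
      by (intro nn_integral_mono) (simp add: ennreal_enn2real_if)
    then show "(\<integral>\<^sup>+x. ennreal (enn2real (S x)) \<partial>M) < \<infinity>"
      using SUP_finite unfolding S_def by (simp add: le_less_trans)
  qed (use lim in simp_all)
  then show ?thesis
    by (simp add: abs_minus_commute)
qed

lemma nn_integral_abs_diff_tendsto_zero_at_within:
  fixes u :: "'b \<Rightarrow> 'a::{first_countable_topology, t2_space} \<Rightarrow> real"
  assumes meas: "\<And>y. y \<in> K \<Longrightarrow> (\<lambda>x. u x y) \<in> borel_measurable M"
    and nonneg: "\<And>x y. 0 \<le> u x y"
    and a: "a \<in> K"
    and cont: "\<And>x. continuous (at a within K) (u x)"
    and envelope: "(\<integral>\<^sup>+x. (SUP y\<in>K. ennreal (u x y)) \<partial>M) < \<infinity>"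
  shows "((\<lambda>y. \<integral>\<^sup>+x. ennreal \<bar>u x y - u x a\<bar> \<partial>M) \<longlongrightarrow> 0) (at a within K)"
  unfolding tendsto_at_iff_sequentially comp_def
proof (intro allI impI)
  fix Y assume Y: "\<forall>i. Y i \<in> K - {a}" and "Y \<longlonglongrightarrow> a"
  show "(\<lambda>i. \<integral>\<^sup>+x. ennreal \<bar>u x (Y i) - u x a\<bar> \<partial>M) \<longlonglongrightarrow> 0"
  proof (rule nn_integral_tendsto_zero_dominated_by_SUP)
    show "(\<lambda>i. u x (Y i)) \<longlonglongrightarrow> u x a" for x
      using Y \<open>Y \<longlonglongrightarrow> a\<close> by (intro continuous_within_tendsto_compose'[OF cont]) auto
    have "(\<integral>\<^sup>+x. (SUP i. ennreal (u x (Y i))) \<partial>M) \<le> (\<integral>\<^sup>+x. (SUP y\<in>K. ennreal (u x y)) \<partial>M)"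
      using Y by (intro nn_integral_mono SUP_subset_mono[of "range Y", simplified image_image]) auto
    then show "(\<integral>\<^sup>+x. (SUP i. ennreal (u x (Y i))) \<partial>M) < \<infinity>"
      using envelope by (rule le_less_trans)
  qed (use Y meas a nonneg in auto)
qed

lemma nn_integral_indicator_le_add_abs_diff:
  assumes "\<And>x. 0 \<le> g x"
  shows "(\<integral>\<^sup>+x. ennreal (f x) * indicator B x \<partial>M)
    \<le> (\<integral>\<^sup>+x. ennreal (g x) * indicator B x + ennreal \<bar>f x - g x\<bar> \<partial>M)"
proof (rule nn_integral_mono)
  fix x
  have "ennreal (f x) \<le> ennreal (g x + \<bar>f x - g x\<bar>)"
    by (intro ennreal_leI) simp
  then show "ennreal (f x) * indicator B x \<le> ennreal (g x) * indicator B x + ennreal \<bar>f x - g x\<bar>"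
    using assms[of x] by (cases "x \<in> B") simp_all
qed

lemma abs_enn2real_diff_le:
  assumes "X \<le> Y + L" "Y \<le> X + L" "X < \<infinity>" "Y < \<infinity>" "L < \<infinity>"
  shows "\<bar>enn2real X - enn2real Y\<bar> \<le> enn2real L"
proof -
  have "enn2real X \<le> enn2real Y + enn2real L" "enn2real Y \<le> enn2real X + enn2real L"
    using assms enn2real_mono[of X "Y + L"] enn2real_mono[of Y "X + L"]
    by (simp_all add: enn2real_plus)
  then show ?thesis
    by linarith
qed

lemma abs_enn2real_nn_integral_indicator_diff_le:
  assumes [measurable]: "f \<in> borel_measurable M" "g \<in> borel_measurable M" "B \<in> sets M"
    and nonneg: "\<And>x. 0 \<le> f x" "\<And>x. 0 \<le> g x"
    and finite: "(\<integral>\<^sup>+x. ennreal (f x) * indicator B x \<partial>M) < \<infinity>"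
      "(\<integral>\<^sup>+x. ennreal (g x) * indicator B x \<partial>M) < \<infinity>"
      "(\<integral>\<^sup>+x. ennreal \<bar>f x - g x\<bar> \<partial>M) < \<infinity>"
  shows "\<bar>enn2real (\<integral>\<^sup>+x. ennreal (f x) * indicator B x \<partial>M)
      - enn2real (\<integral>\<^sup>+x. ennreal (g x) * indicator B x \<partial>M)\<bar>
    \<le> enn2real (\<integral>\<^sup>+x. ennreal \<bar>f x - g x\<bar> \<partial>M)"
proof (rule abs_enn2real_diff_le)
  show "(\<integral>\<^sup>+x. ennreal (f x) * indicator B x \<partial>M)
    \<le> (\<integral>\<^sup>+x. ennreal (g x) * indicator B x \<partial>M) + (\<integral>\<^sup>+x. ennreal \<bar>f x - g x\<bar> \<partial>M)"
    using nn_integral_indicator_le_add_abs_diff[where f = f and g = g and B = B and M = M] nonneg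
    by (simp add: nn_integral_add)
  show "(\<integral>\<^sup>+x. ennreal (g x) * indicator B x \<partial>M)
    \<le> (\<integral>\<^sup>+x. ennreal (f x) * indicator B x \<partial>M) + (\<integral>\<^sup>+x. ennreal \<bar>f x - g x\<bar> \<partial>M)"
    using nn_integral_indicator_le_add_abs_diff[where f = g and g = f and B = B and M = M] nonneg
    by (simp add: nn_integral_add abs_minus_commute)
qed (use finite in simp_all)

lemma abs_divide_diff_le:
  fixes a a0 D D0 l \<epsilon> :: real
  assumes "\<bar>a - a0\<bar> \<le> l" "\<bar>D - D0\<bar> \<le> l" "0 \<le> a0" "a0 \<le> D0" "0 < D0"
    and "l \<le> D0 / 2" "l \<le> \<epsilon> * D0 / 4"
  shows "\<bar>a / D - a0 / D0\<bar> \<le> \<epsilon>"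
proof -
  have D: "D0 / 2 \<le> D"
    using assms by linarith
  have "\<bar>a - a0\<bar> * D0 \<le> l * D0" "a0 * \<bar>D0 - D\<bar> \<le> l * D0"
    using assms by (simp_all add: mult_right_mono mult_mono abs_minus_commute mult.commute[of l])
  moreover have "\<bar>(a - a0) * D0 + a0 * (D0 - D)\<bar> \<le> \<bar>a - a0\<bar> * D0 + a0 * \<bar>D0 - D\<bar>"
    using assms(3,5) abs_triangle_ineq[of "(a - a0) * D0" "a0 * (D0 - D)"]
    by (simp add: abs_mult)
  ultimately have num: "\<bar>(a - a0) * D0 + a0 * (D0 - D)\<bar> \<le> 2 * l * D0"
    by linarith
  have "\<bar>a / D - a0 / D0\<bar> = \<bar>(a - a0) * D0 + a0 * (D0 - D)\<bar> / (D * D0)"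
    using D assms(5) by (simp add: field_simps abs_mult)
  also have "\<dots> \<le> 2 * l * D0 / (D * D0)"
    using num D assms(5) by (intro divide_right_mono) auto
  also have "\<dots> = 2 * l / D"
    using assms(5) by simp
  also have "\<dots> \<le> 2 * l / (D0 / 2)"
    using D assms(1,5) by (intro divide_left_mono) auto
  also have "\<dots> \<le> \<epsilon>"
    using assms(5,7) by (simp add: divide_le_eq)
  finally show ?thesis .
qed

lemma prokhorov_le:
  assumes "0 < \<epsilon>"
    and "\<forall>B \<in> sets (restrict_space borel \<Theta>).
      \<mu> B \<le> \<nu> (eps_nbhd \<Theta> B \<epsilon>) + \<epsilon> \<and> \<nu> B \<le> \<mu> (eps_nbhd \<Theta> B \<epsilon>) + \<epsilon>"
  shows "\<bar>prokhorov \<Theta> \<mu> \<nu>\<bar> \<le> \<epsilon>"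
proof -
  let ?E = "{\<epsilon>. 0 < \<epsilon> \<and> (\<forall>B \<in> sets (restrict_space borel \<Theta>).
      \<mu> B \<le> \<nu> (eps_nbhd \<Theta> B \<epsilon>) + \<epsilon> \<and> \<nu> B \<le> \<mu> (eps_nbhd \<Theta> B \<epsilon>) + \<epsilon>)}"
  have "\<epsilon> \<in> ?E"
    using assms by blast
  moreover have "bdd_below ?E"
    by (rule bdd_belowI[of _ 0]) auto
  ultimately have "Inf ?E \<le> \<epsilon>" "0 \<le> Inf ?E"
    by (auto intro: cInf_lower cInf_greatest)
  then show ?thesis
    unfolding prokhorov_def by simp
qed

lemma subset_eps_nbhd: "B \<subseteq> \<Theta> \<Longrightarrow> 0 < \<epsilon> \<Longrightarrow> B \<subseteq> eps_nbhd \<Theta> B \<epsilon>"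
  unfolding eps_nbhd_def by force

lemma eps_nbhd_subset: "eps_nbhd \<Theta> B \<epsilon> \<subseteq> \<Theta>"
  unfolding eps_nbhd_def by blast

lemma prokhorov_dirac_le:
  fixes \<Theta> :: "'a::metric_space set"
  assumes "x \<in> \<Theta>" "y \<in> \<Theta>" "dist x y < \<epsilon>"
  shows "\<bar>prokhorov \<Theta> (dirac_fun x) (dirac_fun y)\<bar> \<le> \<epsilon>"
proof (rule prokhorov_le)
  show "0 < \<epsilon>"
    using assms(3) zero_le_dist[of x y] by linarith
  show "\<forall>B \<in> sets (restrict_space borel \<Theta>). dirac_fun x B \<le> dirac_fun y (eps_nbhd \<Theta> B \<epsilon>) + \<epsilon>
      \<and> dirac_fun y B \<le> dirac_fun x (eps_nbhd \<Theta> B \<epsilon>) + \<epsilon>"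
    using assms \<open>0 < \<epsilon>\<close>
    by (auto simp: dirac_fun_def indicator_def eps_nbhd_def dist_commute)
qed

lemma prokhorov_le_of_uniformly_close:
  assumes "0 < \<epsilon>"
    and close: "\<And>B. B \<in> sets (restrict_space borel \<Theta>) \<Longrightarrow> \<bar>\<mu> B - \<nu> B\<bar> \<le> \<epsilon>"
    and mono: "\<And>B S. B \<subseteq> S \<Longrightarrow> S \<subseteq> \<Theta> \<Longrightarrow> \<mu> B \<le> \<mu> S \<and> \<nu> B \<le> \<nu> S"
  shows "\<bar>prokhorov \<Theta> \<mu> \<nu>\<bar> \<le> \<epsilon>"
proof (rule prokhorov_le[OF \<open>0 < \<epsilon>\<close>], intro ballI)
  fix B assume B: "B \<in> sets (restrict_space borel \<Theta>)"
  then have "B \<subseteq> \<Theta>"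
    using sets.sets_into_space[OF B] by (simp add: space_restrict_space)
  then have "B \<subseteq> eps_nbhd \<Theta> B \<epsilon>"
    using subset_eps_nbhd \<open>0 < \<epsilon>\<close> by blast
  from mono[OF this eps_nbhd_subset]
  show "\<mu> B \<le> \<nu> (eps_nbhd \<Theta> B \<epsilon>) + \<epsilon> \<and> \<nu> B \<le> \<mu> (eps_nbhd \<Theta> B \<epsilon>) + \<epsilon>"
    using close[OF B] by linarith
qed

lemma prokhorov_dens_prob_le:
  fixes u :: "'a::euclidean_space \<Rightarrow> 'a \<Rightarrow> real" and \<Theta> :: "'a set" and y z :: 'a
  defines "D \<equiv> enn2real (\<integral>\<^sup>+x. ennreal (u x z) * indicator \<Theta> x \<partial>lborel)"
  assumes \<Theta>: "\<Theta> \<in> sets borel"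
    and [measurable]: "(\<lambda>x. u x y) \<in> borel_measurable borel" "(\<lambda>x. u x z) \<in> borel_measurable borel"
    and nonneg: "\<And>x w. 0 \<le> u x w"
    and finite_integral: "\<And>w. w \<in> {y, z} \<Longrightarrow> (\<integral>\<^sup>+x. ennreal (u x w) \<partial>lborel) < \<infinity>"
    and "0 < D" "0 < \<epsilon>"
    and L1_small: "(\<integral>\<^sup>+x. ennreal \<bar>u x y - u x z\<bar> \<partial>lborel) \<le> ennreal (min (D / 2) (\<epsilon> * D / 4))"
  shows "\<bar>prokhorov \<Theta> (dens_prob u \<Theta> y) (dens_prob u \<Theta> z)\<bar> \<le> \<epsilon>"
proof -
  define N where "N w S = (\<integral>\<^sup>+x. ennreal (u x w) * indicator S x \<partial>lborel)" for w S
  define L where "L = (\<integral>\<^sup>+x. ennreal \<bar>u x y - u x z\<bar> \<partial>lborel)"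
  have N_mono: "N w B \<le> N w S" if "B \<subseteq> S" for w B S
    unfolding N_def using that by (intro nn_integral_mono) (auto simp: indicator_def)
  have N_finite: "N w S < \<infinity>" if "w \<in> {y, z}" for w S
  proof -
    have "N w S \<le> (\<integral>\<^sup>+x. ennreal (u x w) \<partial>lborel)"
      unfolding N_def by (intro nn_integral_mono) (simp add: indicator_def)
    then show ?thesis
      using finite_integral[OF that] by (rule le_less_trans)
  qed
  have dens: "dens_prob u \<Theta> w S = enn2real (N w S) / enn2real (N w \<Theta>)" for w S
    unfolding dens_prob_def N_def ..
  have "L < \<infinity>"
    using L1_small unfolding L_def by (simp add: le_less_trans)
  have L_le: "enn2real L \<le> min (D / 2) (\<epsilon> * D / 4)"
    using enn2real_mono[OF L1_small] \<open>0 < D\<close> \<open>0 < \<epsilon>\<close> unfolding L_def by simp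
  have N_close: "\<bar>enn2real (N y B) - enn2real (N z B)\<bar> \<le> enn2real L" if "B \<in> sets borel" for B
    unfolding N_def L_def
    using that nonneg N_finite[of y B] N_finite[of z B] \<open>L < \<infinity>\<close>
    by (intro abs_enn2real_nn_integral_indicator_diff_le) (simp_all add: N_def L_def)
  show ?thesis
  proof (rule prokhorov_le_of_uniformly_close[OF \<open>0 < \<epsilon>\<close>])
    fix B assume "B \<in> sets (restrict_space borel \<Theta>)"
    then have B: "B \<in> sets borel" "B \<subseteq> \<Theta>"
      using \<Theta> by (auto simp: sets_restrict_space_iff)
    show "\<bar>dens_prob u \<Theta> y B - dens_prob u \<Theta> z B\<bar> \<le> \<epsilon>"
      unfolding dens
    proof (rule abs_divide_diff_le)
      show "enn2real (N z B) \<le> enn2real (N z \<Theta>)"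
        using N_mono[OF B(2)] N_finite[of z \<Theta>] by (intro enn2real_mono) auto
      show "0 < enn2real (N z \<Theta>)"
        using \<open>0 < D\<close> unfolding D_def N_def .
    qed (use N_close[OF B(1)] N_close[OF \<Theta>] L_le in \<open>auto simp: D_def N_def\<close>)
  next
    fix B S :: "'a set" assume "B \<subseteq> S"
    then show "dens_prob u \<Theta> y B \<le> dens_prob u \<Theta> y S \<and> dens_prob u \<Theta> z B \<le> dens_prob u \<Theta> z S"
      unfolding dens using N_mono N_finite
      by (auto intro!: divide_right_mono enn2real_mono)
  qed
qed

lemma dens_prob_prokhorov_continuous:
  fixes u :: "'a::euclidean_space \<Rightarrow> 'a \<Rightarrow> real"
  assumes \<Theta>: "\<Theta> \<in> sets borel" and \<theta>0: "\<theta>0 \<in> \<Theta>"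
    and nonneg: "\<forall>x y. 0 \<le> u x y"
    and outside: "\<forall>x y. (x, y) \<notin> \<Theta> \<times> \<Theta> \<longrightarrow> u x y = 0"
    and meas: "\<forall>y\<in>\<Theta>. (\<lambda>x. u x y) \<in> borel_measurable borel"
    and cont: "\<forall>x\<in>\<Theta>. \<exists>U. open U \<and> \<theta>0 \<in> U \<and> continuous_on U (u x)"
    and "0 < r"
    and envelope: "(\<integral>\<^sup>+x. (SUP y \<in> ball \<theta>0 r \<inter> \<Theta>. ennreal (u x y)) * indicator \<Theta> x \<partial>lborel) < \<infinity>"
    and pos: "0 < (\<integral>\<^sup>+x. ennreal (u x \<theta>0) * indicator \<Theta> x \<partial>lborel)"
    and "0 < \<epsilon>"
  shows "\<exists>\<delta>>0. \<forall>y\<in>\<Theta>. dist y \<theta>0 < \<delta> \<longrightarrow>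
    \<bar>prokhorov \<Theta> (dens_prob u \<Theta> y) (dens_prob u \<Theta> \<theta>0)\<bar> \<le> \<epsilon>"
proof -
  define K where "K = ball \<theta>0 r \<inter> \<Theta>"
  define D where "D = enn2real (\<integral>\<^sup>+x. ennreal (u x \<theta>0) * indicator \<Theta> x \<partial>lborel)"
  define L where "L y = (\<integral>\<^sup>+x. ennreal \<bar>u x y - u x \<theta>0\<bar> \<partial>lborel)" for y
  have "\<theta>0 \<in> K"
    using \<theta>0 \<open>0 < r\<close> unfolding K_def by simp
  have "(SUP y\<in>K. ennreal (u x y)) = (SUP y\<in>K. ennreal (u x y)) * indicator \<Theta> x" for x
    using outside \<open>\<theta>0 \<in> K\<close> by (cases "x \<in> \<Theta>") (auto simp: K_def SUP_constant bot_ennreal)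
  then have envelope': "(\<integral>\<^sup>+x. (SUP y\<in>K. ennreal (u x y)) \<partial>lborel) < \<infinity>"
    using envelope unfolding K_def by simp
  have finite_integral: "(\<integral>\<^sup>+x. ennreal (u x y) \<partial>lborel) < \<infinity>" if "y \<in> K" for y
    using that by (intro le_less_trans[OF _ envelope'] nn_integral_mono SUP_upper)
  have "(\<integral>\<^sup>+x. ennreal (u x \<theta>0) * indicator \<Theta> x \<partial>lborel) < \<infinity>"
    by (rule le_less_trans[OF _ finite_integral[OF \<open>\<theta>0 \<in> K\<close>]], rule nn_integral_mono)
      (simp add: indicator_def)
  then have "0 < D"
    using pos unfolding D_def by (simp add: enn2real_positive_iff)
  have "continuous (at \<theta>0 within K) (u x)" for x
  proof (cases "x \<in> \<Theta>")
    case True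
    then obtain U where "open U" "\<theta>0 \<in> U" "continuous_on U (u x)"
      using cont by blast
    then show ?thesis
      by (metis at_within_open continuous_on_eq_continuous_within continuous_within_subset top_greatest)
  next
    case False
    then have "u x = (\<lambda>_. 0)"
      using outside by auto
    then show ?thesis
      by simp
  qed
  then have "(L \<longlongrightarrow> 0) (at \<theta>0 within K)"
    unfolding L_def using meas nonneg \<open>\<theta>0 \<in> K\<close> envelope'
    by (intro nn_integral_abs_diff_tendsto_zero_at_within) (auto simp: K_def)
  moreover have "0 < ennreal (min (D / 2) (\<epsilon> * D / 4))"
    using \<open>0 < D\<close> \<open>0 < \<epsilon>\<close> by simp
  ultimately have "\<forall>\<^sub>F y in at \<theta>0 within K. L y < ennreal (min (D / 2) (\<epsilon> * D / 4))"
    by (rule order_tendstoD(2))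
  then obtain d where "0 < d"
    and d: "\<And>y. y \<in> K \<Longrightarrow> y \<noteq> \<theta>0 \<Longrightarrow> dist y \<theta>0 < d \<Longrightarrow> L y < ennreal (min (D / 2) (\<epsilon> * D / 4))"
    unfolding eventually_at by blast
  show ?thesis
  proof (intro exI[of _ "min d r"] conjI ballI impI)
    fix y assume "y \<in> \<Theta>" "dist y \<theta>0 < min d r"
    then have "y \<in> K"
      unfolding K_def by (simp add: dist_commute)
    then have "L y \<le> ennreal (min (D / 2) (\<epsilon> * D / 4))"
      using d[of y] \<open>dist y \<theta>0 < min d r\<close> by (cases "y = \<theta>0") (auto simp: L_def)
    then show "\<bar>prokhorov \<Theta> (dens_prob u \<Theta> y) (dens_prob u \<Theta> \<theta>0)\<bar> \<le> \<epsilon>"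
      using \<open>y \<in> \<Theta>\<close> \<open>0 < D\<close> \<open>0 < \<epsilon>\<close>
        finite_integral[OF \<open>y \<in> K\<close>] finite_integral[OF \<open>\<theta>0 \<in> K\<close>]
      by (intro prokhorov_dens_prob_le[OF \<Theta>]) (auto simp: meas \<theta>0 nonneg D_def L_def)
  qed (use \<open>0 < d\<close> \<open>0 < r\<close> in simp)
qed

lemma conv_zero_in_prob_comp:
  assumes conv: "conv_zero_in_prob M (\<lambda>T \<omega>. dist (X T \<omega>) a)"
    and range: "\<And>T \<omega>. \<omega> \<in> space M \<Longrightarrow> X T \<omega> \<in> S"
    and cont: "\<And>\<epsilon>. 0 < \<epsilon> \<Longrightarrow> \<exists>\<delta>>0. \<forall>y\<in>S. dist y a < \<delta> \<longrightarrow> \<bar>F y\<bar> \<le> \<epsilon>"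
  shows "conv_zero_in_prob M (\<lambda>T \<omega>. F (X T \<omega>))"
  unfolding conv_zero_in_prob_def
proof (intro allI impI)
  fix \<epsilon> :: real assume "0 < \<epsilon>"
  then obtain \<delta> where "0 < \<delta>" and \<delta>: "\<forall>y\<in>S. dist y a < \<delta> \<longrightarrow> \<bar>F y\<bar> \<le> \<epsilon>"
    using cont by blast
  then have "0 < \<delta> / 2"
    by simp
  from conv[unfolded conv_zero_in_prob_def, rule_format, OF this]
  obtain A where "\<forall>T. A T \<in> sets M \<and> {\<omega> \<in> space M. \<bar>dist (X T \<omega>) a\<bar> > \<delta> / 2} \<subseteq> A T"
    and "(\<lambda>T. measure M (A T)) \<longlonglongrightarrow> 0"
    by blast
  moreover have "{\<omega> \<in> space M. \<bar>F (X T \<omega>)\<bar> > \<epsilon>} \<subseteq> {\<omega> \<in> space M. \<bar>dist (X T \<omega>) a\<bar> > \<delta> / 2}" for T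
  proof (intro subsetI CollectI conjI)
    fix \<omega> assume "\<omega> \<in> {\<omega> \<in> space M. \<bar>F (X T \<omega>)\<bar> > \<epsilon>}"
    then have "\<omega> \<in> space M" "\<not> dist (X T \<omega>) a < \<delta>"
      using \<delta> range by force+
    then show "\<omega> \<in> space M" "\<bar>dist (X T \<omega>) a\<bar> > \<delta> / 2"
      using \<open>0 < \<delta>\<close> by simp_all
  qed
  ultimately show "\<exists>A. (\<forall>T. A T \<in> sets M \<and> {\<omega> \<in> space M. \<bar>F (X T \<omega>)\<bar> > \<epsilon>} \<subseteq> A T)
      \<and> (\<lambda>T. measure M (A T)) \<longlonglongrightarrow> 0"
    by blast
qed

theorem proposition5:
  fixes M :: "'w measure" and \<Theta> :: "'a::euclidean_space set" and \<theta>0 :: 'a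
    and \<theta>s :: "nat \<Rightarrow> 'w \<Rightarrow> 'a"
  assumes "prob_space M"
    and "\<Theta> \<in> sets borel"
    and "\<theta>0 \<in> \<Theta>"
    and "\<And>T. \<theta>s T \<in> borel_measurable M"
    and "\<And>T \<omega>. \<omega> \<in> space M \<Longrightarrow> \<theta>s T \<omega> \<in> \<Theta>"
    and "conv_zero_in_prob M (\<lambda>T \<omega>. dist (\<theta>s T \<omega>) \<theta>0)"
  shows "conv_zero_in_prob M (\<lambda>T \<omega>. prokhorov \<Theta> (dirac_fun (\<theta>s T \<omega>)) (dirac_fun \<theta>0))
    \<and> (\<forall>u :: 'a \<Rightarrow> 'a \<Rightarrow> real.
        ((\<forall>x y. u x y \<ge> 0)
         \<and> (\<forall>x y. (x, y) \<notin> \<Theta> \<times> \<Theta> \<longrightarrow> u x y = 0)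
         \<and> (\<forall>y\<in>\<Theta>. (\<lambda>x. u x y) \<in> borel_measurable borel)
         \<and> (\<forall>y\<in>\<Theta>. \<exists>U. open U \<and> \<theta>0 \<in> U \<and> continuous_on U (\<lambda>x. u y x))
         \<and> (\<exists>r1>0. (\<integral>\<^sup>+ x. (SUP y \<in> ball \<theta>0 r1 \<inter> \<Theta>. ennreal (u x y)) * indicator \<Theta> x \<partial>lborel) < \<infinity>)
         \<and> (\<exists>r2>0. \<forall>y \<in> ball \<theta>0 r2 \<inter> \<Theta>.
               (\<integral>\<^sup>+ x. ennreal (u x y) * indicator \<Theta> x \<partial>lborel) > 0))
        \<longrightarrow> conv_zero_in_prob M (\<lambda>T \<omega>. prokhorov \<Theta> (dens_prob u \<Theta> (\<theta>s T \<omega>)) (dens_prob u \<Theta> \<theta>0)))"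
proof (intro conjI allI impI; (elim conjE exE)?)
  show "conv_zero_in_prob M (\<lambda>T \<omega>. prokhorov \<Theta> (dirac_fun (\<theta>s T \<omega>)) (dirac_fun \<theta>0))"
  proof (rule conv_zero_in_prob_comp[OF assms(6,5)])
    show "\<exists>\<delta>>0. \<forall>y\<in>\<Theta>. dist y \<theta>0 < \<delta> \<longrightarrow> \<bar>prokhorov \<Theta> (dirac_fun y) (dirac_fun \<theta>0)\<bar> \<le> \<epsilon>"
      if "0 < \<epsilon>" for \<epsilon>
      using that by (intro exI[of _ \<epsilon>]) (simp add: prokhorov_dirac_le assms(3))
  qed
next
  fix u :: "'a \<Rightarrow> 'a \<Rightarrow> real" and r1 r2 :: real
  assume u: "\<forall>x y. 0 \<le> u x y" "\<forall>x y. (x, y) \<notin> \<Theta> \<times> \<Theta> \<longrightarrow> u x y = 0"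
      "\<forall>y\<in>\<Theta>. (\<lambda>x. u x y) \<in> borel_measurable borel"
      "\<forall>y\<in>\<Theta>. \<exists>U. open U \<and> \<theta>0 \<in> U \<and> continuous_on U (\<lambda>x. u y x)"
    and r1: "0 < r1" "(\<integral>\<^sup>+ x. (SUP y \<in> ball \<theta>0 r1 \<inter> \<Theta>. ennreal (u x y)) * indicator \<Theta> x \<partial>lborel) < \<infinity>"
    and r2: "0 < r2" "\<forall>y \<in> ball \<theta>0 r2 \<inter> \<Theta>. (\<integral>\<^sup>+ x. ennreal (u x y) * indicator \<Theta> x \<partial>lborel) > 0"
  have "0 < (\<integral>\<^sup>+ x. ennreal (u x \<theta>0) * indicator \<Theta> x \<partial>lborel)"
    using r2 assms(3) by simp
  then show "conv_zero_in_prob M (\<lambda>T \<omega>. prokhorov \<Theta> (dens_prob u \<Theta> (\<theta>s T \<omega>)) (dens_prob u \<Theta> \<theta>0))"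
    by (intro conv_zero_in_prob_comp[OF assms(6,5)] dens_prob_prokhorov_continuous[OF assms(2,3) u r1])
qed

end
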